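(* In the setting below, let $(x_f,y_f,\theta_f)$ be any goal pose. Consider a $4\pi$-arc $LSL$ path reaching this goal pose whose travel time is minimal among all $4\pi$-arc $LSL$ paths reaching it. It satisfies $\alpha+\gamma<4\pi$. The same holds for $RSR$: a $4\pi$-arc $RSR$ path reaching the goal pose whose travel time is minimal among all $4\pi$-arc $RSR$ paths reaching it satisfies $\alpha+\gamma<4\pi$.
   Context: Setting: a vehicle moves in the plane at unit speed with minimum turning radius $r>0$, in a steady current $(w_x,w_y)$ with speed $v_w=\sqrt{w_x^2+w_y^2}\in(0,1)$. The start pose is $(0,0,0)$ and the goal pose is $(x_f,y_f,\theta_f)$ with $\theta_f\in[0,2\pi)$. An $LSL$ path has parameters $(\alpha,\beta,\gamma)$ with $\alpha,\gamma\ge0$ and $\beta\ge0$: a left arc of angle $\alpha$ of radius $r$, a straight segment of length $\beta$, and a left arc of angle $\gamma$, in the frame moving with the current. Its travel time is $T=r(\alpha+\gamma)+\beta$. It reaches the goal iff for some $k\in\mathbb{Z}$: $\alpha+\gamma=2k\pi+\theta_f$, $x_f-w_xT=r\sin\theta_f+\beta\cos\alpha$, and $y_f-w_yT=r(1-\cos\theta_f)+\beta\sin\alpha$. An $RSR$ path is the analogous path with right arcs, with $T=r(\alpha+\gamma)+\beta$. It reaches the goal iff for some $k\in\mathbb{Z}$: $-\alpha-\gamma=2k\pi+\theta_f$, $x_f-w_xT=-r\sin\theta_f+\beta\cos\alpha$, and $y_f-w_yT=-r(1-\cos\theta_f)-\beta\sin\alpha$. A path is a $4\pi$-arc path if $\alpha,\gamma\in[0,4\pi)$.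 *)

theory Defs
  imports Complex_Main
begin

definition travel_time :: "real \<Rightarrow> real \<Rightarrow> real \<Rightarrow> real \<Rightarrow> real" where
  "travel_time r \<alpha> \<beta> \<gamma> = r * (\<alpha> + \<gamma>) + \<beta>"

text \<open>The LSL path (alpha, beta, gamma) reaches the goal (xf, yf, thf) in current (wx, wy).\<close>
definition lsl_reaches :: "real \<Rightarrow> real \<Rightarrow> real \<Rightarrow> real \<Rightarrow> real \<Rightarrow> real \<Rightarrow> real \<Rightarrow> real \<Rightarrow> real \<Rightarrow> bool" where
  "lsl_reaches r wx wy xf yf thf \<alpha> \<beta> \<gamma> \<longleftrightarrow>
     \<alpha> \<ge> 0 \<and> \<beta> \<ge> 0 \<and> \<gamma> \<ge> 0 \<and>
     (\<exists>k::int. \<alpha> + \<gamma> = 2 * of_int k * pi + thf \<and>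
        xf - wx * travel_time r \<alpha> \<beta> \<gamma> = r * sin thf + \<beta> * cos \<alpha> \<and>
        yf - wy * travel_time r \<alpha> \<beta> \<gamma> = r * (1 - cos thf) + \<beta> * sin \<alpha>)"

definition rsr_reaches :: "real \<Rightarrow> real \<Rightarrow> real \<Rightarrow> real \<Rightarrow> real \<Rightarrow> real \<Rightarrow> real \<Rightarrow> real \<Rightarrow> real \<Rightarrow> bool" where
  "rsr_reaches r wx wy xf yf thf \<alpha> \<beta> \<gamma> \<longleftrightarrow>
     \<alpha> \<ge> 0 \<and> \<beta> \<ge> 0 \<and> \<gamma> \<ge> 0 \<and>
     (\<exists>k::int. - \<alpha> - \<gamma> = 2 * of_int k * pi + thf \<and>
        xf - wx * travel_time r \<alpha> \<beta> \<gamma> = - r * sin thf + \<beta> * cos \<alpha> \<and>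
        yf - wy * travel_time r \<alpha> \<beta> \<gamma> = - r * (1 - cos thf) - \<beta> * sin \<alpha>)"

definition four_pi_arc :: "real \<Rightarrow> real \<Rightarrow> bool" where
  "four_pi_arc \<alpha> \<gamma> \<longleftrightarrow> \<alpha> \<in> {0..<4*pi} \<and> \<gamma> \<in> {0..<4*pi}"

end

theory Submission
  imports Defs
begin

text \<open>
  If a 4\<pi>-arc LSL path turns through \<open>\<alpha> + \<gamma> \<ge> 4\<pi>\<close> in total, it contains a superfluous
  full loop. Simply dropping 2\<pi> of turning does not give a path, because the goal drifts with
  the current during the time saved. But the straight segment needed to reach the goal at time
  \<open>t\<close> is the distance between the initial and the final turning circle, a continuous function of
  \<open>t\<close>, so the intermediate value theorem yields an arrival time \<open>T' < T\<close> at which a straight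
  segment fits exactly with total turning \<open>\<alpha> + \<gamma> - 2\<pi>\<close>: a strictly faster 4\<pi>-arc LSL path.
  RSR paths are LSL paths to the goal reflected in the x-axis.
\<close>

text \<open>In the frame moving with the current the goal reached at time \<open>t\<close> sits at
  \<open>(xf - wx t, yf - wy t)\<close>; this is the distance from the centre \<open>(0, r)\<close> of the initial left
  turning circle to the centre of the final one.\<close>
definition lsl_chord :: "real \<Rightarrow> real \<Rightarrow> real \<Rightarrow> real \<Rightarrow> real \<Rightarrow> real \<Rightarrow> real \<Rightarrow> real" where
  "lsl_chord r wx wy xf yf thf t =
     sqrt ((xf - wx * t - r * sin thf)\<^sup>2 + (yf - wy * t - r * (1 - cos thf))\<^sup>2)"

lemma continuous_on_lsl_chord: "continuous_on S (lsl_chord r wx wy xf yf thf)"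
  unfolding lsl_chord_def by (intro continuous_intros)

lemma polar_angle_exists:
  fixes a b :: real
  obtains t where "0 \<le> t" "t < 2 * pi"
    "sqrt (a\<^sup>2 + b\<^sup>2) * cos t = a" "sqrt (a\<^sup>2 + b\<^sup>2) * sin t = b"
proof (cases "a = 0 \<and> b = 0")
  case True
  then show ?thesis using that[of 0] by simp
next
  case False
  define n where "n = sqrt (a\<^sup>2 + b\<^sup>2)"
  have n_pos: "n > 0"
    using False by (simp add: n_def sum_power2_gt_zero_iff)
  have "(a / n)\<^sup>2 + (b / n)\<^sup>2 = 1"
    using False n_pos
    by (simp add: n_def power_divide add_divide_distrib [symmetric] sum_power2_gt_zero_iff)
  then obtain t where "0 \<le> t" "t < 2 * pi" "a / n = cos t" "b / n = sin t"
    by (rule sincos_total_2pi)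
  with n_pos show ?thesis
    using that unfolding n_def [symmetric] by (simp add: field_simps)
qed

lemma IVT_id_minus_nonneg:
  fixes h :: "real \<Rightarrow> real"
  assumes "continuous_on UNIV h" "\<And>t. 0 \<le> h t" "S < T - h T"
  obtains T' where "S \<le> T'" "T' < T" "T' - h T' = S"
proof -
  have "S \<le> T" using assms(2)[of T] assms(3) by linarith
  moreover have "S - h S \<le> S" using assms(2) by simp
  moreover have "continuous_on {S..T} (\<lambda>t. t - h t)"
    using assms(1) by (intro continuous_intros) (auto intro: continuous_on_subset)
  ultimately obtain T' where "S \<le> T'" "T' \<le> T" and T'_eq: "T' - h T' = S"
    using IVT'[of "\<lambda>t. t - h t" S S T] assms(3) by auto
  moreover from T'_eq assms(3) have "T' \<noteq> T" by auto
  ultimately show ?thesis using that by simp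
qed

lemma lsl_reaches_chord:
  assumes "lsl_reaches r wx wy xf yf thf \<alpha> \<beta> \<gamma>"
  shows "\<beta> = lsl_chord r wx wy xf yf thf (travel_time r \<alpha> \<beta> \<gamma>)"
proof -
  have "\<beta> \<ge> 0" using assms by (simp add: lsl_reaches_def)
  moreover have "lsl_chord r wx wy xf yf thf (travel_time r \<alpha> \<beta> \<gamma>) =
      sqrt ((\<beta> * cos \<alpha>)\<^sup>2 + (\<beta> * sin \<alpha>)\<^sup>2)"
    using assms by (auto simp: lsl_reaches_def lsl_chord_def algebra_simps)
  moreover have "(\<beta> * cos \<alpha>)\<^sup>2 + (\<beta> * sin \<alpha>)\<^sup>2 = \<beta>\<^sup>2"
    by (simp add: power_mult_distrib flip: distrib_left)
  ultimately show ?thesis by simp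
qed

lemma lsl_path_with_travel_time:
  assumes "A = 2 * of_int k * pi + thf" "2 * pi \<le> A" "A < 6 * pi"
    and "T - lsl_chord r wx wy xf yf thf T = r * A"
  obtains \<alpha> \<beta> \<gamma> where "lsl_reaches r wx wy xf yf thf \<alpha> \<beta> \<gamma>" "four_pi_arc \<alpha> \<gamma>"
    "travel_time r \<alpha> \<beta> \<gamma> = T"
proof -
  define \<beta> where "\<beta> = lsl_chord r wx wy xf yf thf T"
  obtain a where a: "0 \<le> a" "a < 2 * pi"
    "\<beta> * cos a = xf - wx * T - r * sin thf" "\<beta> * sin a = yf - wy * T - r * (1 - cos thf)"
    unfolding \<beta>_def lsl_chord_def by (rule polar_angle_exists)
  define \<alpha> where "\<alpha> = (if A < 4 * pi then a else a + 2 * pi)"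
  define \<gamma> where "\<gamma> = A - \<alpha>"
  have "cos \<alpha> = cos a" "sin \<alpha> = sin a" by (simp_all add: \<alpha>_def)
  moreover have "0 \<le> \<beta>" by (simp add: \<beta>_def lsl_chord_def)
  moreover have "travel_time r \<alpha> \<beta> \<gamma> = T"
    using assms(4) by (simp add: travel_time_def \<beta>_def \<gamma>_def)
  moreover have "0 \<le> \<alpha>" "\<alpha> < 4 * pi" "0 \<le> \<gamma>" "\<gamma> < 4 * pi"
    using a assms(2,3) by (auto simp: \<alpha>_def \<gamma>_def)
  ultimately show ?thesis
    using that[of \<alpha> \<beta> \<gamma>] a assms(1) by (auto simp: lsl_reaches_def four_pi_arc_def \<gamma>_def)
qed

lemma lsl_remove_full_turn:
  assumes "r > 0" and reach: "lsl_reaches r wx wy xf yf thf \<alpha> \<beta> \<gamma>"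
    and "four_pi_arc \<alpha> \<gamma>" and "4 * pi \<le> \<alpha> + \<gamma>"
  obtains \<alpha>' \<beta>' \<gamma>' where "lsl_reaches r wx wy xf yf thf \<alpha>' \<beta>' \<gamma>'" "four_pi_arc \<alpha>' \<gamma>'"
    "travel_time r \<alpha>' \<beta>' \<gamma>' < travel_time r \<alpha> \<beta> \<gamma>"
proof -
  define T where "T = travel_time r \<alpha> \<beta> \<gamma>"
  define A where "A = \<alpha> + \<gamma> - 2 * pi"
  obtain k where k: "\<alpha> + \<gamma> = 2 * of_int k * pi + thf"
    using reach by (auto simp: lsl_reaches_def)
  have "T - lsl_chord r wx wy xf yf thf T = r * (\<alpha> + \<gamma>)"
    using lsl_reaches_chord[OF reach] by (simp add: T_def travel_time_def)
  then have "r * A < T - lsl_chord r wx wy xf yf thf T"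
    using \<open>r > 0\<close> by (simp add: A_def algebra_simps)
  moreover have "\<And>t. 0 \<le> lsl_chord r wx wy xf yf thf t"
    by (simp add: lsl_chord_def)
  ultimately obtain T' where "T' < T" "T' - lsl_chord r wx wy xf yf thf T' = r * A"
    using IVT_id_minus_nonneg[OF continuous_on_lsl_chord] by metis
  moreover have "A = 2 * of_int (k - 1) * pi + thf"
    using k by (simp add: A_def algebra_simps)
  moreover have "2 * pi \<le> A" "A < 6 * pi"
    using assms(3,4) by (auto simp: A_def four_pi_arc_def)
  ultimately show ?thesis
    using that lsl_path_with_travel_time unfolding T_def by metis
qed

lemma lsl_time_minimal_imp_arc_sum_lt_4pi:
  assumes "r > 0" "lsl_reaches r wx wy xf yf thf \<alpha> \<beta> \<gamma>" "four_pi_arc \<alpha> \<gamma>"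
    and "\<And>\<alpha>' \<beta>' \<gamma>'. lsl_reaches r wx wy xf yf thf \<alpha>' \<beta>' \<gamma>' \<Longrightarrow> four_pi_arc \<alpha>' \<gamma>' \<Longrightarrow>
           travel_time r \<alpha> \<beta> \<gamma> \<le> travel_time r \<alpha>' \<beta>' \<gamma>'"
  shows "\<alpha> + \<gamma> < 4 * pi"
proof (rule ccontr)
  assume "\<not> \<alpha> + \<gamma> < 4 * pi"
  then obtain \<alpha>' \<beta>' \<gamma>'
    where "lsl_reaches r wx wy xf yf thf \<alpha>' \<beta>' \<gamma>'" "four_pi_arc \<alpha>' \<gamma>'"
      and "travel_time r \<alpha>' \<beta>' \<gamma>' < travel_time r \<alpha> \<beta> \<gamma>"
    using lsl_remove_full_turn assms(1-3) by (metis not_less)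
  with assms(4) show False by (meson not_less)
qed

lemma rsr_reaches_iff_lsl_reaches_reflected:
  "rsr_reaches r wx wy xf yf thf \<alpha> \<beta> \<gamma> \<longleftrightarrow> lsl_reaches r wx (- wy) xf (- yf) (- thf) \<alpha> \<beta> \<gamma>"
proof -
  have "- \<alpha> - \<gamma> = 2 * of_int k * pi + thf \<longleftrightarrow> \<alpha> + \<gamma> = 2 * of_int (- k) * pi - thf"
    for k :: int
    by (auto simp: algebra_simps)
  then have "(\<exists>k::int. - \<alpha> - \<gamma> = 2 * of_int k * pi + thf) \<longleftrightarrow>
        (\<exists>k::int. \<alpha> + \<gamma> = 2 * of_int k * pi - thf)"
    by (metis minus_minus)
  then show ?thesis
    by (auto simp: rsr_reaches_def lsl_reaches_def algebra_simps)
qed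

theorem corollary2:
  fixes r wx wy xf yf thf :: real
  assumes "r > 0"
    and "0 < sqrt (wx^2 + wy^2)" and "sqrt (wx^2 + wy^2) < 1"
    and "0 \<le> thf" and "thf < 2 * pi"
  shows "(\<forall>\<alpha> \<beta> \<gamma>. lsl_reaches r wx wy xf yf thf \<alpha> \<beta> \<gamma> \<and> four_pi_arc \<alpha> \<gamma> \<and>
            (\<forall>\<alpha>' \<beta>' \<gamma>'. lsl_reaches r wx wy xf yf thf \<alpha>' \<beta>' \<gamma>' \<and> four_pi_arc \<alpha>' \<gamma>' \<longrightarrow>
                travel_time r \<alpha> \<beta> \<gamma> \<le> travel_time r \<alpha>' \<beta>' \<gamma>')
          \<longrightarrow> \<alpha> + \<gamma> < 4 * pi)
       \<and> (\<forall>\<alpha> \<beta> \<gamma>. rsr_reaches r wx wy xf yf thf \<alpha> \<beta> \<gamma> \<and> four_pi_arc \<alpha> \<gamma> \<and>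
            (\<forall>\<alpha>' \<beta>' \<gamma>'. rsr_reaches r wx wy xf yf thf \<alpha>' \<beta>' \<gamma>' \<and> four_pi_arc \<alpha>' \<gamma>' \<longrightarrow>
                travel_time r \<alpha> \<beta> \<gamma> \<le> travel_time r \<alpha>' \<beta>' \<gamma>')
          \<longrightarrow> \<alpha> + \<gamma> < 4 * pi)"
  using lsl_time_minimal_imp_arc_sum_lt_4pi[OF assms(1), of wx wy xf yf thf]
    lsl_time_minimal_imp_arc_sum_lt_4pi[OF assms(1), of wx "- wy" xf "- yf" "- thf"]
  unfolding rsr_reaches_iff_lsl_reaches_reflected by blast

end
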